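(* Let $T_1^f$ and $T_2^g$ be merge trees with node sets $V(T_1)$ and $V(T_2)$. Let $\Lambda_1 = \{|f(u)-g(w)| : u\in V(T_1), w \in V(T_2)\}$, $\Lambda_2 = \{|f(u)-f(u')|/2 : u,u' \in V(T_1)\}$, $\Lambda_3 = \{|g(w)-g(w')|/2 : w,w'\in V(T_2)\}$ and $\Lambda = \Lambda_1\cup\Lambda_2\cup\Lambda_3$. Then $d_I(T_1^f, T_2^g) \in \Lambda$.
   Context: A merge tree $T^h$ is a finite rooted tree $T$ with a continuous function $h: |T| \to \mathbb{R}$ on its underlying space (interior points of edges included) that is decreasing along every root-to-leaf path, modified by attaching to the root a ray upward along which $h$ increases to $+\infty$; $V(T)$ denotes the set of tree nodes (vertices of $T$). $u^{\varepsilon}$ is the unique ancestor of $u$ with $h(u^\varepsilon) - h(u) = \varepsilon$. For merge trees $T_1^f$, $T_2^g$, a pair of continuous maps $\alpha: |T_1| \to |T_2|$, $\beta: |T_2| \to |T_1|$ is $\varepsilon$-compatible if $g(\alpha(u)) = f(u)+\varepsilon$, $\beta(\alpha(u)) = u^{2\varepsilon}$ for all $u\in|T_1|$ and $f(\beta(w)) = g(w)+\varepsilon$, $\alpha(\beta(w)) = w^{2\varepsilon}$ for all $w \in |T_2|$; the interleaving distance $d_I(T_1^f,T_2^g)$ is the infimum of $\varepsilon$ for which such a pair exists. *)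

theory Defs
  imports Complex_Main
begin

text \<open>The underlying space
is realised as pairs (v, t): the point at height t on the edge from v up to
its parent (for the root: on the ray to +infinity).  The height function
of a point is its second component.\<close>

record 'a mtree =
  nodes :: "'a set"
  par   :: "'a \<Rightarrow> 'a"
  root  :: "'a"
  ht    :: "'a \<Rightarrow> real"

definition merge_tree :: "'a mtree \<Rightarrow> bool" where
  "merge_tree T \<longleftrightarrow> finite (nodes T) \<and> root T \<in> nodes T \<and>
     (\<forall>v \<in> nodes T - {root T}. par T v \<in> nodes T \<and> ht T v < ht T (par T v))"

definition node_anc :: "'a mtree \<Rightarrow> 'a \<Rightarrow> 'a \<Rightarrow> bool" where
  "node_anc T v w \<longleftrightarrow>
     (\<exists>k. w = (par T ^^ k) v \<and> (\<forall>i<k. (par T ^^ i) v \<noteq> root T))"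

definition pts :: "'a mtree \<Rightarrow> ('a \<times> real) set" where
  "pts T = {(v, t). v \<in> nodes T \<and> ht T v \<le> t \<and> (v \<noteq> root T \<longrightarrow> t < ht T (par T v))}"

definition pt_anc :: "'a mtree \<Rightarrow> 'a \<times> real \<Rightarrow> 'a \<times> real \<Rightarrow> bool" where
  "pt_anc T p q \<longleftrightarrow> node_anc T (fst p) (fst q) \<and> snd p \<le> snd q"

definition up :: "'a mtree \<Rightarrow> 'a \<times> real \<Rightarrow> real \<Rightarrow> 'a \<times> real" where
  "up T u e = (THE w. w \<in> pts T \<and> pt_anc T u w \<and> snd w - snd u = e)"

text \<open>Path metric on |T| (edge lengths = height differences); it induces the
topology of the geometric realisation.\<close>
definition merge_ht :: "'a mtree \<Rightarrow> 'a \<times> real \<Rightarrow> 'a \<times> real \<Rightarrow> real" where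
  "merge_ht T p q = Inf {snd w | w. w \<in> pts T \<and> pt_anc T p w \<and> pt_anc T q w}"

definition tdist :: "'a mtree \<Rightarrow> 'a \<times> real \<Rightarrow> 'a \<times> real \<Rightarrow> real" where
  "tdist T p q = 2 * merge_ht T p q - snd p - snd q"

definition cont_map :: "'a mtree \<Rightarrow> 'b mtree \<Rightarrow> ('a \<times> real \<Rightarrow> 'b \<times> real) \<Rightarrow> bool" where
  "cont_map T1 T2 \<phi> \<longleftrightarrow> (\<forall>p \<in> pts T1. \<forall>e>0. \<exists>d>0. \<forall>q \<in> pts T1.
      tdist T1 p q < d \<longrightarrow> tdist T2 (\<phi> p) (\<phi> q) < e)"

definition eps_compatible ::
  "'a mtree \<Rightarrow> 'b mtree \<Rightarrow> real \<Rightarrow> ('a \<times> real \<Rightarrow> 'b \<times> real) \<Rightarrow> ('b \<times> real \<Rightarrow> 'a \<times> real) \<Rightarrow> bool" where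
  "eps_compatible T1 T2 \<epsilon> \<alpha> \<beta> \<longleftrightarrow>
     0 \<le> \<epsilon> \<and> cont_map T1 T2 \<alpha> \<and> cont_map T2 T1 \<beta> \<and>
     (\<forall>u \<in> pts T1. \<alpha> u \<in> pts T2 \<and> snd (\<alpha> u) = snd u + \<epsilon> \<and> \<beta> (\<alpha> u) = up T1 u (2 * \<epsilon>)) \<and>
     (\<forall>w \<in> pts T2. \<beta> w \<in> pts T1 \<and> snd (\<beta> w) = snd w + \<epsilon> \<and> \<alpha> (\<beta> w) = up T2 w (2 * \<epsilon>))"

definition interleaving_dist :: "'a mtree \<Rightarrow> 'b mtree \<Rightarrow> real" where
  "interleaving_dist T1 T2 = Inf {\<epsilon>. \<exists>\<alpha> \<beta>. eps_compatible T1 T2 \<epsilon> \<alpha> \<beta>}"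

end

theory Submission
  imports Defs
begin

text \<open>Maps of an \<epsilon>-compatible pair raise heights by \<epsilon>, and for such maps continuity is
  equivalent to commuting with the ancestor maps u \<mapsto> u^s: near any point no node lies
  within some height gap, so a continuous map cannot jump between branches, while maps
  commuting with ancestors are 1-Lipschitz.  Suppose an \<epsilon>-compatible pair exists with
  \<epsilon> \<notin> \<Lambda>, and let \<mu> be the largest element of \<Lambda> below \<epsilon>.  Then for every node v of T1 no
  node of T2 has height in (f v + \<mu>, f v + \<epsilon>], no node of T1 has height in
  (f v + 2\<mu>, f v + 2\<epsilon>], and symmetrically.  Hence both maps can be slid down by \<epsilon> - \<mu>
  along the edges, giving a \<mu>-compatible pair.  As \<Lambda> is finite, the infimum defining
  d_I is attained at an element of \<Lambda>.\<close>

section \<open>Ancestors and the path metric\<close>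


lemma node_anc_iff:
  "node_anc T v w \<longleftrightarrow> w = v \<or> (v \<noteq> root T \<and> node_anc T (par T v) w)"
proof -
  have ex_nat: "(\<exists>k::nat. P k) \<longleftrightarrow> P 0 \<or> (\<exists>k. P (Suc k))" for P
    by (metis not0_implies_Suc)
  have shift: "(par T ^^ Suc k) v = (par T ^^ k) (par T v)" for k
    by (simp only: funpow_Suc_right comp_apply)
  show ?thesis
    unfolding node_anc_def
      ex_nat[where P = "\<lambda>k. w = (par T ^^ k) v \<and> (\<forall>i<k. (par T ^^ i) v \<noteq> root T)"]
    by (simp only: All_less_Suc2 shift funpow_0 not_less0 simp_thms) blast
qed

lemma node_anc_refl [simp]: "node_anc T v v"
  using node_anc_iff[of T v v] by blast

lemma node_anc_parI: "v \<noteq> root T \<Longrightarrow> node_anc T (par T v) w \<Longrightarrow> node_anc T v w"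
  by (simp add: node_anc_iff[of T v w])

lemma node_anc_induct [consumes 1, case_names refl step]:
  assumes "node_anc T v w"
    and refl: "\<And>v. P v v"
    and step: "\<And>v. v \<noteq> root T \<Longrightarrow> node_anc T (par T v) w \<Longrightarrow> P (par T v) w \<Longrightarrow> P v w"
  shows "P v w"
proof -
  obtain k where "w = (par T ^^ k) v" "\<forall>i<k. (par T ^^ i) v \<noteq> root T"
    using assms(1) unfolding node_anc_def by blast
  then show ?thesis
  proof (induction k arbitrary: v)
    case 0
    then show ?case using refl by simp
  next
    case (Suc k)
    have "v \<noteq> root T" "w = (par T ^^ k) (par T v)" "\<forall>i<k. (par T ^^ i) (par T v) \<noteq> root T"
      using Suc.prems by (auto simp only: All_less_Suc2 funpow_Suc_right comp_apply funpow_0)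
    moreover from calculation have "node_anc T (par T v) w"
      unfolding node_anc_def by blast
    ultimately show ?case using step Suc.IH by blast
  qed
qed

lemma node_anc_trans: "node_anc T u v \<Longrightarrow> node_anc T v w \<Longrightarrow> node_anc T u w"
  by (induction u v rule: node_anc_induct) (auto intro: node_anc_parI)

lemma pts_fstD: "p \<in> pts T \<Longrightarrow> fst p \<in> nodes T \<and> ht T (fst p) \<le> snd p"
  by (auto simp: pts_def)

lemma pts_parD: "p \<in> pts T \<Longrightarrow> fst p \<noteq> root T \<Longrightarrow> snd p < ht T (par T (fst p))"
  by (auto simp: pts_def)

lemma pt_anc_refl [simp]: "pt_anc T p p"
  by (simp add: pt_anc_def)

lemma pt_anc_trans: "pt_anc T p q \<Longrightarrow> pt_anc T q w \<Longrightarrow> pt_anc T p w"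
  unfolding pt_anc_def using node_anc_trans by fastforce

definition common_ancs :: "'a mtree \<Rightarrow> 'a \<times> real \<Rightarrow> 'a \<times> real \<Rightarrow> ('a \<times> real) set" where
  "common_ancs T p q = {w \<in> pts T. pt_anc T p w \<and> pt_anc T q w}"

lemma merge_ht_eq_Inf: "merge_ht T p q = Inf (snd ` common_ancs T p q)"
  unfolding merge_ht_def common_ancs_def by (simp add: image_def)

lemma merge_ht_sym: "merge_ht T p q = merge_ht T q p"
  unfolding merge_ht_def by meson

lemma tdist_sym: "tdist T p q = tdist T q p"
  unfolding tdist_def using merge_ht_sym by simp

context
  fixes T :: "'a mtree"
  assumes mt: "merge_tree T"
begin

lemma root_in_nodes: "root T \<in> nodes T"
  using mt unfolding merge_tree_def by blast

lemma finite_nodes: "finite (nodes T)"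
  using mt unfolding merge_tree_def by blast

lemma par_in_nodes: "v \<in> nodes T \<Longrightarrow> v \<noteq> root T \<Longrightarrow> par T v \<in> nodes T"
  using mt unfolding merge_tree_def by blast

lemma ht_less_par: "v \<in> nodes T \<Longrightarrow> v \<noteq> root T \<Longrightarrow> ht T v < ht T (par T v)"
  using mt unfolding merge_tree_def by blast

lemma node_anc_in_nodes: "node_anc T v w \<Longrightarrow> v \<in> nodes T \<Longrightarrow> w \<in> nodes T"
  by (induction v w rule: node_anc_induct) (auto intro: par_in_nodes)

lemma node_anc_ht_le: "node_anc T v w \<Longrightarrow> v \<in> nodes T \<Longrightarrow> ht T v \<le> ht T w"
proof (induction v w rule: node_anc_induct)
  case (step v)
  then show ?case using par_in_nodes ht_less_par by fastforce
qed simp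

lemma node_anc_properD:
  assumes "node_anc T v w" "v \<in> nodes T" "w \<noteq> v"
  shows "v \<noteq> root T" "node_anc T (par T v) w" "ht T (par T v) \<le> ht T w"
proof -
  show "v \<noteq> root T" "node_anc T (par T v) w"
    using assms(1,3) node_anc_iff by metis+
  then show "ht T (par T v) \<le> ht T w"
    using node_anc_ht_le par_in_nodes assms(2) by blast
qed

lemma node_anc_linear: "node_anc T v a \<Longrightarrow> node_anc T v b \<Longrightarrow> node_anc T a b \<or> node_anc T b a"
proof (induction v a arbitrary: b rule: node_anc_induct)
  case (step v)
  then show ?case by (metis node_anc_iff node_anc_parI)
qed simp

lemma node_anc_root: "v \<in> nodes T \<Longrightarrow> node_anc T v (root T)"
proof (induction v rule: measure_induct_rule[where f = "\<lambda>v. card {w \<in> nodes T. ht T v < ht T w}"])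
  case (less v)
  show ?case
  proof (cases "v = root T")
    case False
    then have pv: "par T v \<in> nodes T" "ht T v < ht T (par T v)"
      using par_in_nodes ht_less_par less.prems by auto
    then have "{w \<in> nodes T. ht T (par T v) < ht T w} \<subset> {w \<in> nodes T. ht T v < ht T w}"
      by auto
    then have "card {w \<in> nodes T. ht T (par T v) < ht T w} < card {w \<in> nodes T. ht T v < ht T w}"
      by (simp add: psubset_card_mono finite_nodes)
    then show ?thesis using less.IH pv(1) node_anc_parI[OF False] by blast
  qed simp
qed

lemma node_pt: "v \<in> nodes T \<Longrightarrow> (v, ht T v) \<in> pts T"
  using ht_less_par by (auto simp: pts_def)

lemma pt_anc_at_height_exists:
  assumes p: "p \<in> pts T" and s: "snd p \<le> s"
  shows "\<exists>q \<in> pts T. pt_anc T p q \<and> snd q = s"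
proof -
  define A where "A = {a. node_anc T (fst p) a \<and> ht T a \<le> s}"
  have "A \<subseteq> nodes T"
    using node_anc_in_nodes pts_fstD[OF p] by (auto simp: A_def)
  then have "finite A"
    using finite_subset finite_nodes by blast
  moreover have "fst p \<in> A"
    using pts_fstD[OF p] s by (auto simp: A_def)
  ultimately obtain a where a: "a \<in> A" "ht T a = Max (ht T ` A)"
    by (metis Max_in empty_iff finite_imageI image_iff)
  then have highest: "ht T b \<le> ht T a" if "b \<in> A" for b
    using that \<open>finite A\<close> by simp
  have an: "node_anc T (fst p) a" "ht T a \<le> s" "a \<in> nodes T"
    using a(1) node_anc_in_nodes pts_fstD[OF p] by (auto simp: A_def)
  have "s < ht T (par T a)" if "a \<noteq> root T"
  proof (rule ccontr)
    assume "\<not> s < ht T (par T a)"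
    then have "par T a \<in> A"
      using an that node_anc_trans node_anc_parI[OF that node_anc_refl] by (auto simp: A_def)
    then show False
      using highest ht_less_par[OF an(3) that] by fastforce
  qed
  then have "(a, s) \<in> pts T"
    using an by (auto simp: pts_def)
  moreover have "pt_anc T p (a, s)"
    using an s by (simp add: pt_anc_def)
  ultimately show ?thesis by auto
qed

lemma pt_anc_at_height_unique:
  assumes "q1 \<in> pts T" "q2 \<in> pts T" "pt_anc T p q1" "pt_anc T p q2" "snd q1 = snd q2"
  shows "q1 = q2"
proof -
  have no_proper_anc: "q = q'" if q: "q \<in> pts T" "q' \<in> pts T" "node_anc T (fst q) (fst q')"
    and eq: "snd q = snd q'" for q q'
  proof (rule ccontr)
    assume "q \<noteq> q'"
    then have "fst q' \<noteq> fst q" using eq by (simp add: prod_eq_iff)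
    then have "fst q \<noteq> root T" "ht T (par T (fst q)) \<le> ht T (fst q')"
      using node_anc_properD q pts_fstD by blast+
    then show False
      using pts_parD[OF q(1)] pts_fstD[OF q(2)] eq by simp
  qed
  have "node_anc T (fst q1) (fst q2) \<or> node_anc T (fst q2) (fst q1)"
    using assms(3,4) node_anc_linear unfolding pt_anc_def by blast
  then show ?thesis
    using no_proper_anc[of q1 q2] no_proper_anc[of q2 q1] assms(1,2,5) by auto
qed

lemma up_char:
  assumes "p \<in> pts T" "0 \<le> e"
  shows "up T p e \<in> pts T \<and> pt_anc T p (up T p e) \<and> snd (up T p e) = snd p + e"
proof -
  obtain q where q: "q \<in> pts T" "pt_anc T p q" "snd q = snd p + e"
    using pt_anc_at_height_exists[OF assms(1), of "snd p + e"] assms(2) by auto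
  have "\<exists>!q. q \<in> pts T \<and> pt_anc T p q \<and> snd q - snd p = e"
  proof (rule ex1I[of _ q])
    fix w assume "w \<in> pts T \<and> pt_anc T p w \<and> snd w - snd p = e"
    then show "w = q"
      using pt_anc_at_height_unique[of w q p] q by simp
  qed (use q in simp)
  then have "up T p e \<in> pts T \<and> pt_anc T p (up T p e) \<and> snd (up T p e) - snd p = e"
    unfolding up_def by (rule theI')
  then show ?thesis by simp
qed

lemma up_in_pts: "p \<in> pts T \<Longrightarrow> 0 \<le> e \<Longrightarrow> up T p e \<in> pts T"
  using up_char by blast

lemma pt_anc_up: "p \<in> pts T \<Longrightarrow> 0 \<le> e \<Longrightarrow> pt_anc T p (up T p e)"
  using up_char by blast

lemma snd_up [simp]: "p \<in> pts T \<Longrightarrow> 0 \<le> e \<Longrightarrow> snd (up T p e) = snd p + e"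
  using up_char by blast

lemma up_eqI:
  assumes "p \<in> pts T" "q \<in> pts T" "pt_anc T p q" "snd q = snd p + e"
  shows "up T p e = q"
proof -
  have "0 \<le> e" using assms(3,4) by (simp add: pt_anc_def)
  then have "up T p e \<in> pts T" "pt_anc T p (up T p e)" "snd (up T p e) = snd p + e"
    using up_char assms(1) by blast+
  then show ?thesis
    using pt_anc_at_height_unique[of "up T p e" q p] assms(2-4) by simp
qed

lemma up_0 [simp]: "p \<in> pts T \<Longrightarrow> up T p 0 = p"
  by (rule up_eqI) auto

lemma up_up:
  assumes "p \<in> pts T" "0 \<le> a" "0 \<le> b"
  shows "up T (up T p a) b = up T p (a + b)"
proof -
  have pa: "up T p a \<in> pts T" "pt_anc T p (up T p a)" "snd (up T p a) = snd p + a"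
    using up_char assms by blast+
  then have "up T (up T p a) b \<in> pts T" "pt_anc T (up T p a) (up T (up T p a) b)"
    "snd (up T (up T p a) b) = snd p + (a + b)"
    using up_char assms by auto
  from up_eqI[OF assms(1) this(1) pt_anc_trans[OF pa(2) this(2)] this(3)] show ?thesis
    by simp
qed

lemma up_of_pt_anc: "p \<in> pts T \<Longrightarrow> q \<in> pts T \<Longrightarrow> pt_anc T p q \<Longrightarrow> up T p (snd q - snd p) = q"
  by (rule up_eqI) auto

lemma up_from_node:
  assumes "p \<in> pts T"
  shows "up T (fst p, ht T (fst p)) (snd p - ht T (fst p)) = p"
  using up_of_pt_anc[OF node_pt assms] pts_fstD[OF assms] by (simp add: pt_anc_def)

lemma root_pt_anc:
  assumes "p \<in> pts T" "snd p \<le> s" "ht T (root T) \<le> s"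
  shows "(root T, s) \<in> pts T" "pt_anc T p (root T, s)"
  using assms root_in_nodes node_anc_root pts_fstD by (auto simp: pts_def pt_anc_def)

lemma up_eq_root:
  assumes "p \<in> pts T" "0 \<le> s" "ht T (root T) \<le> snd p + s"
  shows "up T p s = (root T, snd p + s)"
  using up_eqI root_pt_anc assms by simp

lemma common_ancs_nonempty:
  assumes "p \<in> pts T" "q \<in> pts T"
  shows "common_ancs T p q \<noteq> {}"
proof -
  define M where "M = max (max (snd p) (snd q)) (ht T (root T))"
  have "snd p \<le> M" "snd q \<le> M" "ht T (root T) \<le> M"
    by (auto simp: M_def)
  then have "(root T, M) \<in> common_ancs T p q"
    using root_pt_anc[of p M] root_pt_anc[of q M] assms unfolding common_ancs_def by blast
  then show ?thesis by blast
qed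

lemma merge_ht_ge: "p \<in> pts T \<Longrightarrow> q \<in> pts T \<Longrightarrow> snd p \<le> merge_ht T p q"
  unfolding merge_ht_eq_Inf using common_ancs_nonempty
  by (intro cInf_greatest) (auto simp: common_ancs_def pt_anc_def)

lemma merge_ht_le: "w \<in> common_ancs T p q \<Longrightarrow> merge_ht T p q \<le> snd w"
  unfolding merge_ht_eq_Inf
  by (rule cInf_lower) (auto simp: bdd_below_def common_ancs_def pt_anc_def)

lemma tdist_up:
  assumes "p \<in> pts T" "0 \<le> r"
  shows "tdist T p (up T p r) = r"
proof -
  have u: "up T p r \<in> pts T" "pt_anc T p (up T p r)" "snd (up T p r) = snd p + r"
    using up_char assms by blast+
  then have "merge_ht T p (up T p r) \<le> snd p + r"
    using merge_ht_le[of "up T p r" p "up T p r"] by (simp add: common_ancs_def)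
  moreover have "snd p + r \<le> merge_ht T p (up T p r)"
    using merge_ht_ge[OF u(1) assms(1)] merge_ht_sym[of T p] u(3) by simp
  ultimately show ?thesis
    unfolding tdist_def using u(3) by simp
qed

text \<open>A point y that does not lie above x is separated from it by the branching node
  below their merge height, so it is far from x unless a node lies just above y.\<close>

lemma up_eq_if_close:
  assumes x: "x \<in> pts T" and y: "y \<in> pts T" and xy: "snd x \<le> snd y"
    and no_node: "\<forall>n\<in>nodes T. snd y < ht T n \<longrightarrow> snd y + \<delta> \<le> ht T n"
    and close: "tdist T x y < 2 * \<delta>"
  shows "up T x (snd y - snd x) = y"
proof (rule up_of_pt_anc[OF x y], rule ccontr)
  assume not_anc: "\<not> pt_anc T x y"
  have branch: "fst y \<noteq> root T \<and> ht T (par T (fst y)) \<le> snd w" if w: "w \<in> common_ancs T x y" for w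
  proof -
    have "node_anc T (fst x) (fst w)" "node_anc T (fst y) (fst w)" "w \<in> pts T"
      using w by (auto simp: common_ancs_def pt_anc_def)
    moreover from calculation have "fst w \<noteq> fst y"
      using not_anc xy by (auto simp: pt_anc_def)
    ultimately show ?thesis
      using node_anc_properD pts_fstD[OF y] pts_fstD[of w] by fastforce
  qed
  then have y_root: "fst y \<noteq> root T"
    using common_ancs_nonempty[OF x y] by blast
  have "ht T (par T (fst y)) \<le> merge_ht T x y"
    unfolding merge_ht_eq_Inf using common_ancs_nonempty[OF x y] branch
    by (intro cInf_greatest) auto
  moreover have "snd y + \<delta> \<le> ht T (par T (fst y))"
    using no_node pts_parD[OF y y_root] par_in_nodes pts_fstD[OF y] y_root by blast
  ultimately show False
    using close xy unfolding tdist_def by linarith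
qed

lemma node_height_gap: "\<exists>\<eta>>0. \<forall>n\<in>nodes T. h < ht T n \<longrightarrow> h + \<eta> \<le> ht T n"
proof -
  define D where "D = insert 1 ((\<lambda>n. ht T n - h) ` {n \<in> nodes T. h < ht T n})"
  have D: "finite D" "D \<noteq> {}" "\<forall>x\<in>D. 0 < x"
    using finite_nodes by (auto simp: D_def)
  have "h + Min D \<le> ht T n" if "n \<in> nodes T" "h < ht T n" for n
  proof -
    have "Min D \<le> ht T n - h"
      using that D(1) by (intro Min_le) (auto simp: D_def)
    then show ?thesis by simp
  qed
  moreover have "0 < Min D"
    using D by simp
  ultimately show ?thesis by blast
qed

lemma up_cancel:
  assumes x: "x \<in> pts T" and y: "y \<in> pts T" and "snd x = snd y" "0 \<le> d"
    and "up T x d = up T y d"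
    and no_node: "\<forall>n\<in>nodes T. \<not> (snd x < ht T n \<and> ht T n \<le> snd x + d)"
  shows "x = y"
proof -
  have same_node: "fst (up T z d) = fst z" if z: "z \<in> pts T" "snd z = snd x" for z
  proof (rule ccontr)
    assume "fst (up T z d) \<noteq> fst z"
    moreover have "node_anc T (fst z) (fst (up T z d))"
      using pt_anc_up[OF z(1) \<open>0 \<le> d\<close>] by (simp add: pt_anc_def)
    ultimately have "fst z \<noteq> root T" "ht T (par T (fst z)) \<le> snd (up T z d)"
      using node_anc_properD pts_fstD[OF z(1)] pts_fstD[OF up_in_pts[OF z(1) \<open>0 \<le> d\<close>]]
      by (fastforce, fastforce)
    then show False
      using no_node pts_parD[OF z(1)] par_in_nodes pts_fstD[OF z(1)] z(2) snd_up[OF z(1) \<open>0 \<le> d\<close>]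
      by force
  qed
  show ?thesis
    using same_node[OF x] same_node[OF y] assms(3,5) by (simp add: prod_eq_iff)
qed

end

section \<open>Height-shifting maps and continuity\<close>

definition height_shift :: "'a mtree \<Rightarrow> 'b mtree \<Rightarrow> real \<Rightarrow> ('a \<times> real \<Rightarrow> 'b \<times> real) \<Rightarrow> bool" where
  "height_shift T1 T2 c \<phi> \<longleftrightarrow> (\<forall>p\<in>pts T1. \<phi> p \<in> pts T2 \<and> snd (\<phi> p) = snd p + c)"

definition commutes_with_up :: "'a mtree \<Rightarrow> 'b mtree \<Rightarrow> ('a \<times> real \<Rightarrow> 'b \<times> real) \<Rightarrow> bool" where
  "commutes_with_up T1 T2 \<phi> \<longleftrightarrow> (\<forall>p\<in>pts T1. \<forall>s\<ge>0. \<phi> (up T1 p s) = up T2 (\<phi> p) s)"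

lemma tdist_le_if_commutes_with_up:
  assumes m1: "merge_tree T1" and m2: "merge_tree T2"
    and shift: "height_shift T1 T2 c \<phi>" and comm: "commutes_with_up T1 T2 \<phi>"
    and p: "p \<in> pts T1" and q: "q \<in> pts T1"
  shows "tdist T2 (\<phi> p) (\<phi> q) \<le> tdist T1 p q"
proof -
  have maps_anc: "pt_anc T2 (\<phi> p') (\<phi> w)" if "p' \<in> pts T1" "w \<in> pts T1" "pt_anc T1 p' w" for p' w
  proof -
    have "\<phi> w = up T2 (\<phi> p') (snd w - snd p')"
      using up_of_pt_anc[OF m1 that] comm that unfolding commutes_with_up_def pt_anc_def
      by (metis diff_ge_0_iff_ge)
    then show ?thesis
      using pt_anc_up[OF m2] shift that unfolding height_shift_def pt_anc_def by auto
  qed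
  have "merge_ht T2 (\<phi> p) (\<phi> q) - c \<le> snd w" if "w \<in> common_ancs T1 p q" for w
  proof -
    have "\<phi> w \<in> common_ancs T2 (\<phi> p) (\<phi> q)"
      using that maps_anc p q shift unfolding common_ancs_def height_shift_def by blast
    then show ?thesis
      using merge_ht_le[OF m2] shift that unfolding height_shift_def common_ancs_def by fastforce
  qed
  then have "merge_ht T2 (\<phi> p) (\<phi> q) - c \<le> merge_ht T1 p q"
    unfolding merge_ht_eq_Inf[of T1] using common_ancs_nonempty[OF m1 p q]
    by (intro cInf_greatest) auto
  then show ?thesis
    using shift p q unfolding tdist_def height_shift_def by auto
qed

lemma cont_map_if_commutes_with_up:
  assumes "merge_tree T1" "merge_tree T2" "height_shift T1 T2 c \<phi>" "commutes_with_up T1 T2 \<phi>"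
  shows "cont_map T1 T2 \<phi>"
  unfolding cont_map_def
  using tdist_le_if_commutes_with_up[OF assms] by (meson le_less_trans)

text \<open>No node lies within some height gap above the image of q, so continuity at q
  forbids nearby points of an edge to be sent to different branches.\<close>

lemma commutes_with_up_near:
  assumes m1: "merge_tree T1" and m2: "merge_tree T2"
    and shift: "height_shift T1 T2 c \<phi>" and cont: "cont_map T1 T2 \<phi>" and q: "q \<in> pts T1"
  obtains \<rho> where "\<rho> > 0"
    and "\<And>p r. p \<in> pts T1 \<Longrightarrow> 0 \<le> r \<Longrightarrow> r < \<rho> \<Longrightarrow> q = p \<or> q = up T1 p r \<Longrightarrow>
           \<phi> (up T1 p r) = up T2 (\<phi> p) r"
proof -
  define H where "H = snd (\<phi> q)"
  obtain \<eta> where \<eta>: "\<eta> > 0" "\<forall>n\<in>nodes T2. H < ht T2 n \<longrightarrow> H + \<eta> \<le> ht T2 n"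
    using node_height_gap[OF m2] by blast
  obtain d where d: "d > 0" "\<forall>q'\<in>pts T1. tdist T1 q q' < d \<longrightarrow> tdist T2 (\<phi> q) (\<phi> q') < \<eta>"
    using cont q \<eta>(1) unfolding cont_map_def by blast
  show thesis
  proof (rule that[of "min d (\<eta> / 2)"])
    show "min d (\<eta> / 2) > 0"
      using d \<eta> by simp
    fix p r assume p: "p \<in> pts T1" and r: "0 \<le> r" "r < min d (\<eta> / 2)"
      and qp: "q = p \<or> q = up T1 p r"
    define p' where "p' = up T1 p r"
    have p': "p' \<in> pts T1" "tdist T1 p p' = r"
      using up_in_pts[OF m1 p r(1)] tdist_up[OF m1 p r(1)] by (simp_all add: p'_def)
    have close: "tdist T2 (\<phi> p) (\<phi> p') < \<eta>"
      using qp
    proof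
      assume "q = p"
      then show ?thesis using d(2) p' r by auto
    next
      assume "q = up T1 p r"
      then have "tdist T2 (\<phi> p') (\<phi> p) < \<eta>"
        using d(2) p p' r tdist_sym[of T1 p' p] by (auto simp: p'_def)
      then show ?thesis
        using tdist_sym[of T2] by simp
    qed
    have hts: "snd (\<phi> p') = snd (\<phi> p) + r" "H \<le> snd (\<phi> p')" "snd (\<phi> p') \<le> H + r"
      using qp shift p p' snd_up[OF m1 p r(1)] r(1) unfolding height_shift_def H_def p'_def
      by auto
    have "up T2 (\<phi> p) (snd (\<phi> p') - snd (\<phi> p)) = \<phi> p'"
    proof (rule up_eq_if_close[OF m2, where \<delta> = "\<eta> - r"])
      show "\<forall>n\<in>nodes T2. snd (\<phi> p') < ht T2 n \<longrightarrow> snd (\<phi> p') + (\<eta> - r) \<le> ht T2 n"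
        using \<eta>(2) hts by force
      show "tdist T2 (\<phi> p) (\<phi> p') < 2 * (\<eta> - r)"
        using close r(2) by simp
    qed (use shift p p' hts r(1) in \<open>auto simp: height_shift_def\<close>)
    then show "\<phi> (up T1 p r) = up T2 (\<phi> p) r"
      using hts(1) by (simp add: p'_def)
  qed
qed

lemma real_nonneg_induct [consumes 1, case_names base limit step]:
  fixes s :: real
  assumes "0 \<le> s" and base: "P 0"
    and limit: "\<And>s. 0 < s \<Longrightarrow> (\<And>t. 0 \<le> t \<Longrightarrow> t < s \<Longrightarrow> P t) \<Longrightarrow> P s"
    and step: "\<And>s. 0 \<le> s \<Longrightarrow> P s \<Longrightarrow> \<exists>\<rho>>0. \<forall>t. s \<le> t \<and> t < s + \<rho> \<longrightarrow> P t"
  shows "P s"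
proof (rule ccontr)
  define bad where "bad = {t. 0 \<le> t \<and> \<not> P t}"
  assume "\<not> P s"
  then have ne: "bad \<noteq> {}"
    using \<open>0 \<le> s\<close> by (auto simp: bad_def)
  have bdd: "bdd_below bad"
    by (auto simp: bad_def bdd_below_def)
  define \<sigma> where "\<sigma> = Inf bad"
  have \<sigma>: "0 \<le> \<sigma>"
    unfolding \<sigma>_def using ne by (intro cInf_greatest) (auto simp: bad_def)
  have below: "P t" if "0 \<le> t" "t < \<sigma>" for t
    using cInf_lower[OF _ bdd, of t] that unfolding \<sigma>_def bad_def by force
  then have "P \<sigma>"
    using base limit \<sigma> by (cases "\<sigma> = 0") auto
  then obtain \<rho> where "\<rho> > 0" and above: "\<forall>t. \<sigma> \<le> t \<and> t < \<sigma> + \<rho> \<longrightarrow> P t"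
    using step \<sigma> by blast
  obtain t where "t \<in> bad" "t < \<sigma> + \<rho>"
    using cInf_lessD[OF ne, of "\<sigma> + \<rho>"] \<open>\<rho> > 0\<close> unfolding \<sigma>_def by auto
  moreover from this(1) have "\<sigma> \<le> t"
    unfolding \<sigma>_def by (rule cInf_lower[OF _ bdd])
  ultimately show False
    using above by (auto simp: bad_def)
qed

lemma commutes_with_up_if_cont_map:
  assumes m1: "merge_tree T1" and m2: "merge_tree T2"
    and shift: "height_shift T1 T2 c \<phi>" and cont: "cont_map T1 T2 \<phi>"
  shows "commutes_with_up T1 T2 \<phi>"
  unfolding commutes_with_up_def
proof (intro ballI allI impI)
  fix p s assume p: "p \<in> pts T1" and "0 \<le> (s::real)"
  have \<phi>p: "\<phi> p \<in> pts T2"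
    using shift p by (simp add: height_shift_def)
  show "\<phi> (up T1 p s) = up T2 (\<phi> p) s"
  using \<open>0 \<le> s\<close>
  proof (induction s rule: real_nonneg_induct)
    case (limit s)
    have "up T1 p s \<in> pts T1"
      using up_in_pts[OF m1 p] limit(1) by simp
    then obtain \<rho> where "\<rho> > 0" and near: "\<And>p' r. p' \<in> pts T1 \<Longrightarrow> 0 \<le> r \<Longrightarrow> r < \<rho> \<Longrightarrow>
        up T1 p s = p' \<or> up T1 p s = up T1 p' r \<Longrightarrow> \<phi> (up T1 p' r) = up T2 (\<phi> p') r"
      using commutes_with_up_near[OF m1 m2 shift cont] by blast
    define t where "t = s - min \<rho> s / 2"
    have t: "0 \<le> t" "t < s" "0 \<le> s - t" "s - t < \<rho>"
      using limit(1) \<open>\<rho> > 0\<close> by (auto simp: t_def)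
    have "up T1 p s = up T1 (up T1 p t) (s - t)"
      using up_up[OF m1 p t(1,3)] by simp
    then have "\<phi> (up T1 p s) = up T2 (\<phi> (up T1 p t)) (s - t)"
      using near[OF up_in_pts[OF m1 p t(1)] t(3,4) disjI2] by simp
    also have "\<dots> = up T2 (\<phi> p) s"
      using limit(2)[OF t(1,2)] up_up[OF m2 \<phi>p t(1,3)] by simp
    finally show ?case .
  next
    case (step s)
    have ps: "up T1 p s \<in> pts T1"
      using up_in_pts[OF m1 p step(1)] .
    then obtain \<rho> where "\<rho> > 0" and near: "\<And>p' r. p' \<in> pts T1 \<Longrightarrow> 0 \<le> r \<Longrightarrow> r < \<rho> \<Longrightarrow>
        up T1 p s = p' \<or> up T1 p s = up T1 p' r \<Longrightarrow> \<phi> (up T1 p' r) = up T2 (\<phi> p') r"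
      using commutes_with_up_near[OF m1 m2 shift cont] by blast
    have "\<phi> (up T1 p t) = up T2 (\<phi> p) t" if "s \<le> t" "t < s + \<rho>" for t
    proof -
      have "\<phi> (up T1 p t) = \<phi> (up T1 (up T1 p s) (t - s))"
        using up_up[OF m1 p step(1), of "t - s"] that by simp
      also have "\<dots> = up T2 (up T2 (\<phi> p) s) (t - s)"
        using near[OF ps _ _ disjI1, of "t - s"] step(2) that by simp
      also have "\<dots> = up T2 (\<phi> p) t"
        using up_up[OF m2 \<phi>p step(1), of "t - s"] that by simp
      finally show ?thesis .
    qed
    then show ?case
      using \<open>\<rho> > 0\<close> by blast
  qed (use p m1 m2 \<phi>p in simp)
qed

lemma cont_map_iff_commutes_with_up:
  assumes "merge_tree T1" "merge_tree T2" "height_shift T1 T2 c \<phi>"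
  shows "cont_map T1 T2 \<phi> \<longleftrightarrow> commutes_with_up T1 T2 \<phi>"
  using cont_map_if_commutes_with_up commutes_with_up_if_cont_map assms by blast

lemma eps_compatible_iff:
  assumes "merge_tree T1" "merge_tree T2"
  shows "eps_compatible T1 T2 \<epsilon> \<alpha> \<beta> \<longleftrightarrow>
    0 \<le> \<epsilon> \<and> height_shift T1 T2 \<epsilon> \<alpha> \<and> height_shift T2 T1 \<epsilon> \<beta> \<and>
    commutes_with_up T1 T2 \<alpha> \<and> commutes_with_up T2 T1 \<beta> \<and>
    (\<forall>u\<in>pts T1. \<beta> (\<alpha> u) = up T1 u (2 * \<epsilon>)) \<and> (\<forall>w\<in>pts T2. \<alpha> (\<beta> w) = up T2 w (2 * \<epsilon>))"
  using cont_map_iff_commutes_with_up[OF assms, of \<epsilon> \<alpha>]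
    cont_map_iff_commutes_with_up[OF assms(2,1), of \<epsilon> \<beta>]
  unfolding eps_compatible_def height_shift_def by blast

section \<open>Lowering an interleaving\<close>

definition no_nodes_in_band :: "'a mtree \<Rightarrow> 'b mtree \<Rightarrow> real \<Rightarrow> real \<Rightarrow> bool" where
  "no_nodes_in_band T1 T2 a b \<longleftrightarrow>
     (\<forall>v\<in>nodes T1. \<forall>w\<in>nodes T2. \<not> (ht T1 v + a < ht T2 w \<and> ht T2 w \<le> ht T1 v + b))"

context
  fixes T1 :: "'a mtree" and T2 :: "'b mtree" and \<phi> :: "'a \<times> real \<Rightarrow> 'b \<times> real" and \<epsilon> \<mu> :: real
  assumes m1: "merge_tree T1" and m2: "merge_tree T2"
    and shift: "height_shift T1 T2 \<epsilon> \<phi>" and comm: "commutes_with_up T1 T2 \<phi>"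
    and band: "no_nodes_in_band T1 T2 \<mu> \<epsilon>" and \<mu>: "0 \<le> \<mu>" "\<mu> \<le> \<epsilon>"
begin

text \<open>Lowering \<phi> by \<epsilon> - \<mu>: the image of a node v is moved down along its edge to height
  ht v + \<mu>, which stays on that edge because no node of T2 lies in the band between, and the
  rest of the edge above v is mapped by following ancestors.\<close>

definition lowered_node :: "'a \<Rightarrow> 'b \<times> real" where
  "lowered_node v = (fst (\<phi> (v, ht T1 v)), ht T1 v + \<mu>)"

definition lowered :: "'a \<times> real \<Rightarrow> 'b \<times> real" where
  "lowered p = up T2 (lowered_node (fst p)) (snd p - ht T1 (fst p))"

lemma lowered_node_in_pts_up:
  assumes v: "v \<in> nodes T1"
  shows "lowered_node v \<in> pts T2" "up T2 (lowered_node v) (\<epsilon> - \<mu>) = \<phi> (v, ht T1 v)"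
proof -
  define y where "y = \<phi> (v, ht T1 v)"
  have y: "y \<in> pts T2" "snd y = ht T1 v + \<epsilon>"
    using shift node_pt[OF m1 v] by (simp_all add: y_def height_shift_def)
  then have "ht T2 (fst y) \<le> ht T1 v + \<mu>"
    using band v pts_fstD[OF y(1)] unfolding no_nodes_in_band_def by fastforce
  then show ln: "lowered_node v \<in> pts T2"
    using y pts_fstD[OF y(1)] pts_parD[OF y(1)] \<mu>
    by (force simp: lowered_node_def y_def[symmetric] pts_def)
  show "up T2 (lowered_node v) (\<epsilon> - \<mu>) = \<phi> (v, ht T1 v)"
    using up_eqI[OF m2 ln y(1)] y \<mu> by (simp add: lowered_node_def y_def pt_anc_def)
qed

lemma up_lowered_node:
  assumes v: "v \<in> nodes T1" and vc: "node_anc T1 v c"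
  shows "up T2 (lowered_node v) (ht T1 c - ht T1 v) = lowered_node c" (is "?x = _")
proof (rule up_cancel[OF m2])
  have c: "c \<in> nodes T1" and h: "0 \<le> ht T1 c - ht T1 v"
    using node_anc_in_nodes[OF m1 vc v] node_anc_ht_le[OF m1 vc v] by simp_all
  note ln = lowered_node_in_pts_up[OF v] and lc = lowered_node_in_pts_up[OF c]
  show "?x \<in> pts T2" "lowered_node c \<in> pts T2" "0 \<le> \<epsilon> - \<mu>"
    using up_in_pts[OF m2 ln(1) h] lc(1) \<mu> by simp_all
  show hx: "snd ?x = snd (lowered_node c)"
    using snd_up[OF m2 ln(1) h] by (simp add: lowered_node_def)
  have "up T1 (v, ht T1 v) (ht T1 c - ht T1 v) = (c, ht T1 c)"
    using up_eqI[OF m1 node_pt[OF m1 v] node_pt[OF m1 c]] vc h by (simp add: pt_anc_def)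
  then have "up T2 (\<phi> (v, ht T1 v)) (ht T1 c - ht T1 v) = \<phi> (c, ht T1 c)"
    using comm node_pt[OF m1 v] h unfolding commutes_with_up_def by metis
  then show "up T2 ?x (\<epsilon> - \<mu>) = up T2 (lowered_node c) (\<epsilon> - \<mu>)"
    using up_up[OF m2 ln(1) h, of "\<epsilon> - \<mu>"] up_up[OF m2 ln(1), of "\<epsilon> - \<mu>" "ht T1 c - ht T1 v"]
      ln lc h \<mu>
    by (simp add: add.commute)
  show "\<forall>n\<in>nodes T2. \<not> (snd ?x < ht T2 n \<and> ht T2 n \<le> snd ?x + (\<epsilon> - \<mu>))"
    using band c hx unfolding no_nodes_in_band_def by (simp add: lowered_node_def)
qed

lemma height_shift_lowered: "height_shift T1 T2 \<mu> lowered"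
  unfolding height_shift_def
proof
  fix p assume p: "p \<in> pts T1"
  have "0 \<le> snd p - ht T1 (fst p)" "lowered_node (fst p) \<in> pts T2"
    using pts_fstD[OF p] lowered_node_in_pts_up by auto
  then show "lowered p \<in> pts T2 \<and> snd (lowered p) = snd p + \<mu>"
    using up_in_pts[OF m2] snd_up[OF m2] by (simp add: lowered_def lowered_node_def)
qed

lemma up_lowered:
  assumes p: "p \<in> pts T1"
  shows "up T2 (lowered p) (\<epsilon> - \<mu>) = \<phi> p"
proof -
  define v t where "v = fst p" and "t = snd p - ht T1 (fst p)"
  have vt: "v \<in> nodes T1" "0 \<le> t" "0 \<le> \<epsilon> - \<mu>"
    using pts_fstD[OF p] \<mu> by (simp_all add: v_def t_def)
  note ln = lowered_node_in_pts_up[OF vt(1)]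
  have "up T2 (lowered p) (\<epsilon> - \<mu>) = up T2 (up T2 (lowered_node v) (\<epsilon> - \<mu>)) t"
    using up_up[OF m2 ln(1) vt(2,3)] up_up[OF m2 ln(1) vt(3,2)]
    by (simp add: lowered_def v_def t_def add.commute)
  also have "\<dots> = \<phi> (up T1 (v, ht T1 v) t)"
    using ln(2) comm node_pt[OF m1 vt(1)] vt(2) by (simp add: commutes_with_up_def)
  also have "\<dots> = \<phi> p"
    using up_from_node[OF m1 p] by (simp add: v_def t_def)
  finally show ?thesis .
qed

lemma commutes_with_up_lowered: "commutes_with_up T1 T2 lowered"
  unfolding commutes_with_up_def
proof (intro ballI allI impI)
  fix p s assume p: "p \<in> pts T1" and s: "0 \<le> (s::real)"
  define p' where "p' = up T1 p s"
  have p': "p' \<in> pts T1" "node_anc T1 (fst p) (fst p')" "snd p' = snd p + s"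
    using up_char[OF m1 p s] by (simp_all add: p'_def pt_anc_def)
  have v: "fst p \<in> nodes T1" "0 \<le> snd p - ht T1 (fst p)"
    using pts_fstD[OF p] by simp_all
  have c: "0 \<le> ht T1 (fst p') - ht T1 (fst p)" "0 \<le> snd p' - ht T1 (fst p')"
    using node_anc_ht_le[OF m1 p'(2) v(1)] pts_fstD[OF p'(1)] by simp_all
  note ln = lowered_node_in_pts_up(1)[OF v(1)]
  have "lowered p' = up T2 (up T2 (lowered_node (fst p)) (ht T1 (fst p') - ht T1 (fst p)))
      (snd p' - ht T1 (fst p'))"
    using up_lowered_node[OF v(1) p'(2)] by (simp add: lowered_def)
  also have "\<dots> = up T2 (up T2 (lowered_node (fst p)) (snd p - ht T1 (fst p))) s"
    using up_up[OF m2 ln c] up_up[OF m2 ln v(2) s] p'(3) by (simp add: algebra_simps)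
  finally show "lowered (up T1 p s) = up T2 (lowered p) s"
    by (simp add: p'_def lowered_def)
qed

lemma ex_lowered:
  "\<exists>\<phi>'. height_shift T1 T2 \<mu> \<phi>' \<and> commutes_with_up T1 T2 \<phi>' \<and>
     (\<forall>p\<in>pts T1. up T2 (\<phi>' p) (\<epsilon> - \<mu>) = \<phi> p)"
  using height_shift_lowered commutes_with_up_lowered up_lowered by blast

end

lemma commutes_with_up_comp:
  assumes "height_shift T1 T2 c f" "commutes_with_up T1 T2 f" "commutes_with_up T2 T3 g"
  shows "commutes_with_up T1 T3 (g \<circ> f)"
  using assms unfolding height_shift_def commutes_with_up_def by simp

lemma commutes_with_up_up:
  assumes "merge_tree T" "0 \<le> c"
  shows "commutes_with_up T T (\<lambda>p. up T p c)"
  using up_up[OF assms(1)] assms(2) unfolding commutes_with_up_def by (simp add: add.commute)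

lemma commutes_with_up_eqI:
  assumes "merge_tree T1" "commutes_with_up T1 T2 f" "commutes_with_up T1 T2 g"
    and nodes: "\<forall>v\<in>nodes T1. f (v, ht T1 v) = g (v, ht T1 v)" and p: "p \<in> pts T1"
  shows "f p = g p"
  using assms(2,3) nodes node_pt[OF assms(1)] pts_fstD[OF p] up_from_node[OF assms(1) p]
  unfolding commutes_with_up_def by (metis diff_ge_0_iff_ge)

lemma lowered_composite:
  assumes m1: "merge_tree T1"
    and \<alpha>': "height_shift T1 T2 \<mu> \<alpha>'" "commutes_with_up T1 T2 \<alpha>'"
      "\<forall>p\<in>pts T1. up T2 (\<alpha>' p) (\<epsilon> - \<mu>) = \<alpha> p"
    and \<beta>': "height_shift T2 T1 \<mu> \<beta>'" "commutes_with_up T2 T1 \<beta>'"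
      "\<forall>w\<in>pts T2. up T1 (\<beta>' w) (\<epsilon> - \<mu>) = \<beta> w"
    and \<beta>: "commutes_with_up T2 T1 \<beta>" and \<beta>\<alpha>: "\<forall>u\<in>pts T1. \<beta> (\<alpha> u) = up T1 u (2 * \<epsilon>)"
    and band: "no_nodes_in_band T1 T1 (2 * \<mu>) (2 * \<epsilon>)" and \<mu>: "0 \<le> \<mu>" "\<mu> \<le> \<epsilon>"
    and u: "u \<in> pts T1"
  shows "\<beta>' (\<alpha>' u) = up T1 u (2 * \<mu>)"
proof -
  have "\<beta>' (\<alpha>' n) = up T1 n (2 * \<mu>)" (is "?x = ?y")
    if n: "n = (v, ht T1 v)" "v \<in> nodes T1" for n v
  proof (rule up_cancel[OF m1])
    have np: "n \<in> pts T1" "\<alpha>' n \<in> pts T2"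
      using node_pt[OF m1] n \<alpha>'(1) by (auto simp: height_shift_def)
    have d: "0 \<le> \<epsilon> - \<mu>" "0 \<le> 2 * \<mu>"
      using \<mu> by simp_all
    show x: "?x \<in> pts T1" "?y \<in> pts T1"
      using \<beta>'(1) np up_in_pts[OF m1 np(1) d(2)] by (auto simp: height_shift_def)
    show hx: "snd ?x = snd ?y" "0 \<le> 2 * (\<epsilon> - \<mu>)"
      using \<alpha>'(1) \<beta>'(1) np snd_up[OF m1 np(1) d(2)] \<mu> by (auto simp: height_shift_def)
    have "up T1 ?x (2 * (\<epsilon> - \<mu>)) = up T1 (\<beta> (\<alpha>' n)) (\<epsilon> - \<mu>)"
      using up_up[OF m1 x(1) d(1) d(1)] \<beta>'(3) np by simp
    also have "\<dots> = \<beta> (\<alpha> n)"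
      using \<beta> \<alpha>'(3) np d unfolding commutes_with_up_def by metis
    also have "\<dots> = up T1 ?y (2 * (\<epsilon> - \<mu>))"
      using \<beta>\<alpha> up_up[OF m1 np(1) d(2), of "2 * (\<epsilon> - \<mu>)"] np \<mu> by simp
    finally show "up T1 ?x (2 * (\<epsilon> - \<mu>)) = up T1 ?y (2 * (\<epsilon> - \<mu>))" .
    show "\<forall>w\<in>nodes T1. \<not> (snd ?x < ht T1 w \<and> ht T1 w \<le> snd ?x + 2 * (\<epsilon> - \<mu>))"
      using band n hx snd_up[OF m1 np(1) d(2)] unfolding no_nodes_in_band_def
      by (auto simp: algebra_simps)
  qed
  then show ?thesis
    using commutes_with_up_eqI[OF m1 commutes_with_up_comp[OF \<alpha>'(1,2) \<beta>'(2)]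
        commutes_with_up_up[OF m1, of "2 * \<mu>"] _ u] \<mu>
    by simp
qed

lemma eps_compatible_lower:
  assumes m1: "merge_tree T1" and m2: "merge_tree T2"
    and compat: "eps_compatible T1 T2 \<epsilon> \<alpha> \<beta>" and \<mu>: "0 \<le> \<mu>" "\<mu> \<le> \<epsilon>"
    and band12: "no_nodes_in_band T1 T2 \<mu> \<epsilon>" and band21: "no_nodes_in_band T2 T1 \<mu> \<epsilon>"
    and band11: "no_nodes_in_band T1 T1 (2 * \<mu>) (2 * \<epsilon>)"
    and band22: "no_nodes_in_band T2 T2 (2 * \<mu>) (2 * \<epsilon>)"
  shows "\<exists>\<alpha>' \<beta>'. eps_compatible T1 T2 \<mu> \<alpha>' \<beta>'"
proof -
  note c = compat[unfolded eps_compatible_iff[OF m1 m2]]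
  obtain \<alpha>' where \<alpha>': "height_shift T1 T2 \<mu> \<alpha>'" "commutes_with_up T1 T2 \<alpha>'"
      "\<forall>p\<in>pts T1. up T2 (\<alpha>' p) (\<epsilon> - \<mu>) = \<alpha> p"
    using ex_lowered[OF m1 m2 _ _ band12 \<mu>] c by blast
  obtain \<beta>' where \<beta>': "height_shift T2 T1 \<mu> \<beta>'" "commutes_with_up T2 T1 \<beta>'"
      "\<forall>w\<in>pts T2. up T1 (\<beta>' w) (\<epsilon> - \<mu>) = \<beta> w"
    using ex_lowered[OF m2 m1 _ _ band21 \<mu>] c by blast
  have "\<forall>u\<in>pts T1. \<beta>' (\<alpha>' u) = up T1 u (2 * \<mu>)"
    using lowered_composite[OF m1 \<alpha>' \<beta>' _ _ band11 \<mu>] c by blast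
  moreover have "\<forall>w\<in>pts T2. \<alpha>' (\<beta>' w) = up T2 w (2 * \<mu>)"
    using lowered_composite[OF m2 \<beta>' \<alpha>' _ _ band22 \<mu>] c by blast
  ultimately show ?thesis
    using \<alpha>' \<beta>' \<mu> eps_compatible_iff[OF m1 m2] by blast
qed

section \<open>Critical values\<close>

lemma shift_to_root:
  assumes m1: "merge_tree T1" and m2: "merge_tree T2"
    and low: "\<forall>u\<in>nodes T1. ht T2 (root T2) \<le> ht T1 u + \<epsilon>"
  shows "height_shift T1 T2 \<epsilon> (\<lambda>p. (root T2, snd p + \<epsilon>))"
    and "commutes_with_up T1 T2 (\<lambda>p. (root T2, snd p + \<epsilon>))"
proof -
  have root_pt: "(root T2, snd p + \<epsilon>) \<in> pts T2" if "p \<in> pts T1" for p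
    using low pts_fstD[OF that] root_in_nodes[OF m2] by (fastforce simp: pts_def)
  then show "height_shift T1 T2 \<epsilon> (\<lambda>p. (root T2, snd p + \<epsilon>))"
    by (simp add: height_shift_def)
  show "commutes_with_up T1 T2 (\<lambda>p. (root T2, snd p + \<epsilon>))"
    unfolding commutes_with_up_def
  proof (intro ballI allI impI)
    fix p s assume p: "p \<in> pts T1" and s: "0 \<le> (s::real)"
    have "ht T2 (root T2) \<le> snd p + \<epsilon> + s"
      using pts_fstD[OF root_pt[OF p]] s by simp
    then show "(root T2, snd (up T1 p s) + \<epsilon>) = up T2 (root T2, snd p + \<epsilon>) s"
      using up_eq_root[OF m2 root_pt[OF p] s] snd_up[OF m1 p s] by simp
  qed
qed

lemma eps_compatible_root_maps:
  assumes m1: "merge_tree T1" and m2: "merge_tree T2"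
    and bound: "\<forall>u\<in>nodes T1. \<forall>w\<in>nodes T2. \<bar>ht T1 u - ht T2 w\<bar> \<le> \<epsilon>"
  shows "eps_compatible T1 T2 \<epsilon> (\<lambda>p. (root T2, snd p + \<epsilon>)) (\<lambda>w. (root T1, snd w + \<epsilon>))"
proof -
  have low12: "\<forall>u\<in>nodes T1. ht T2 (root T2) \<le> ht T1 u + \<epsilon>"
    and low21: "\<forall>w\<in>nodes T2. ht T1 (root T1) \<le> ht T2 w + \<epsilon>"
    using bound root_in_nodes[OF m1] root_in_nodes[OF m2] by (fastforce simp: abs_le_iff)+
  have "0 \<le> \<epsilon>"
    using bound root_in_nodes[OF m1] root_in_nodes[OF m2] by force
  moreover have "up T1 u (2 * \<epsilon>) = (root T1, snd u + \<epsilon> + \<epsilon>)" if u: "u \<in> pts T1" for u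
  proof -
    have "ht T1 (root T1) \<le> snd u + 2 * \<epsilon>"
      using low21 low12 root_in_nodes[OF m2] pts_fstD[OF u] by force
    then show ?thesis
      using up_eq_root[OF m1 u] \<open>0 \<le> \<epsilon>\<close> by simp
  qed
  moreover have "up T2 w (2 * \<epsilon>) = (root T2, snd w + \<epsilon> + \<epsilon>)" if w: "w \<in> pts T2" for w
  proof -
    have "ht T2 (root T2) \<le> snd w + 2 * \<epsilon>"
      using low21 low12 root_in_nodes[OF m1] pts_fstD[OF w] by force
    then show ?thesis
      using up_eq_root[OF m2 w] \<open>0 \<le> \<epsilon>\<close> by simp
  qed
  ultimately show ?thesis
    using shift_to_root[OF m1 m2 low12] shift_to_root[OF m2 m1 low21] eps_compatible_iff[OF m1 m2] by simp
qed

definition critical_values :: "'a mtree \<Rightarrow> 'b mtree \<Rightarrow> real set" where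
  "critical_values T1 T2 =
           {\<bar>ht T1 u - ht T2 w\<bar> | u w. u \<in> nodes T1 \<and> w \<in> nodes T2}
         \<union> {\<bar>ht T1 u - ht T1 u'\<bar> / 2 | u u'. u \<in> nodes T1 \<and> u' \<in> nodes T1}
         \<union> {\<bar>ht T2 w - ht T2 w'\<bar> / 2 | w w'. w \<in> nodes T2 \<and> w' \<in> nodes T2}"

lemma finite_critical_values:
  assumes "merge_tree T1" "merge_tree T2"
  shows "finite (critical_values T1 T2)"
  unfolding critical_values_def using finite_nodes[OF assms(1)] finite_nodes[OF assms(2)]
  by (intro finite_UnI finite_image_set2) auto

lemma zero_in_critical_values: "merge_tree T1 \<Longrightarrow> 0 \<in> critical_values T1 T2"
  unfolding critical_values_def using root_in_nodes by fastforce

lemma critical_values_memI: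
  "u \<in> nodes T1 \<Longrightarrow> w \<in> nodes T2 \<Longrightarrow> \<bar>ht T2 w - ht T1 u\<bar> \<in> critical_values T1 T2"
  "w \<in> nodes T2 \<Longrightarrow> u \<in> nodes T1 \<Longrightarrow> \<bar>ht T1 u - ht T2 w\<bar> \<in> critical_values T1 T2"
  "u \<in> nodes T1 \<Longrightarrow> u' \<in> nodes T1 \<Longrightarrow> \<bar>ht T1 u' - ht T1 u\<bar> / 2 \<in> critical_values T1 T2"
  "w \<in> nodes T2 \<Longrightarrow> w' \<in> nodes T2 \<Longrightarrow> \<bar>ht T2 w' - ht T2 w\<bar> / 2 \<in> critical_values T1 T2"
  unfolding critical_values_def by (blast intro: abs_minus_commute)+

lemma ex_eps_compatible:
  assumes "merge_tree T1" "merge_tree T2"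
  shows "\<exists>\<epsilon> \<alpha> \<beta>. eps_compatible T1 T2 \<epsilon> \<alpha> \<beta>"
proof -
  have "\<bar>ht T1 u - ht T2 w\<bar> \<le> Max (critical_values T1 T2)" if "u \<in> nodes T1" "w \<in> nodes T2" for u w
    using that finite_critical_values[OF assms] by (intro Max_ge) (auto simp: critical_values_def)
  then show ?thesis
    using eps_compatible_root_maps[OF assms] by blast
qed

lemma no_nodes_in_bands_if_no_critical_value:
  assumes gap: "\<forall>c\<in>critical_values T1 T2. \<not> (\<mu> < c \<and> c \<le> \<epsilon>)" and "0 \<le> \<mu>"
  shows "no_nodes_in_band T1 T2 \<mu> \<epsilon>" "no_nodes_in_band T2 T1 \<mu> \<epsilon>"
    "no_nodes_in_band T1 T1 (2 * \<mu>) (2 * \<epsilon>)" "no_nodes_in_band T2 T2 (2 * \<mu>) (2 * \<epsilon>)"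
proof -
  have no_crit: "\<not> (\<mu> < c \<and> c \<le> \<epsilon>)" if "c \<in> critical_values T1 T2" for c
    using gap that by blast
  show "no_nodes_in_band T1 T2 \<mu> \<epsilon>"
    unfolding no_nodes_in_band_def using no_crit[OF critical_values_memI(1)] \<open>0 \<le> \<mu>\<close> by force
  show "no_nodes_in_band T2 T1 \<mu> \<epsilon>"
    unfolding no_nodes_in_band_def using no_crit[OF critical_values_memI(2)] \<open>0 \<le> \<mu>\<close> by force
  show "no_nodes_in_band T1 T1 (2 * \<mu>) (2 * \<epsilon>)"
    unfolding no_nodes_in_band_def using no_crit[OF critical_values_memI(3)] \<open>0 \<le> \<mu>\<close> by force
  show "no_nodes_in_band T2 T2 (2 * \<mu>) (2 * \<epsilon>)"
    unfolding no_nodes_in_band_def using no_crit[OF critical_values_memI(4)] \<open>0 \<le> \<mu>\<close> by force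
qed

lemma compatible_critical_value_below:
  assumes m1: "merge_tree T1" and m2: "merge_tree T2" and compat: "eps_compatible T1 T2 \<epsilon> \<alpha> \<beta>"
  shows "\<exists>\<mu>\<in>critical_values T1 T2. \<mu> \<le> \<epsilon> \<and> (\<exists>\<alpha>' \<beta>'. eps_compatible T1 T2 \<mu> \<alpha>' \<beta>')"
proof (cases "\<epsilon> \<in> critical_values T1 T2")
  case True
  with compat show ?thesis by blast
next
  case False
  define below where "below = {c \<in> critical_values T1 T2. c < \<epsilon>}"
  have "0 \<le> \<epsilon>"
    using compat by (simp add: eps_compatible_def)
  moreover have "\<epsilon> \<noteq> 0"
    using False zero_in_critical_values[OF m1, of T2] by auto
  ultimately have "0 \<in> below"
    using zero_in_critical_values[OF m1, of T2] by (simp add: below_def)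
  moreover have "finite below"
    using finite_critical_values[OF m1 m2] by (simp add: below_def)
  ultimately have \<mu>: "Max below \<in> below" "\<forall>c\<in>below. c \<le> Max below" "0 \<le> Max below"
    by (auto intro!: Max_in Max_ge)
  have gap: "\<forall>c\<in>critical_values T1 T2. \<not> (Max below < c \<and> c \<le> \<epsilon>)"
  proof (intro ballI notI)
    fix c assume "c \<in> critical_values T1 T2" "Max below < c \<and> c \<le> \<epsilon>"
    then have "c \<in> below"
      using False by (auto simp: below_def order.order_iff_strict)
    then show False
      using \<mu>(2) \<open>Max below < c \<and> c \<le> \<epsilon>\<close> by force
  qed
  have "Max below \<le> \<epsilon>"
    using \<mu>(1) by (simp add: below_def)
  then have "\<exists>\<alpha>' \<beta>'. eps_compatible T1 T2 (Max below) \<alpha>' \<beta>'"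
    using eps_compatible_lower[OF m1 m2 compat \<mu>(3)]
      no_nodes_in_bands_if_no_critical_value[OF gap \<mu>(3)] by blast
  moreover have "Max below \<in> critical_values T1 T2"
    using \<mu>(1) by (simp add: below_def)
  ultimately show ?thesis
    using \<open>Max below \<le> \<epsilon>\<close> by blast
qed

lemma cInf_mem_if_dominated_by_finite:
  fixes E L :: "'a::conditionally_complete_linorder set"
  assumes "finite L" "E \<noteq> {}" and dom: "\<And>e. e \<in> E \<Longrightarrow> \<exists>l\<in>E \<inter> L. l \<le> e"
  shows "Inf E \<in> E \<inter> L"
proof -
  have fin: "finite (E \<inter> L)" "E \<inter> L \<noteq> {}"
    using assms by blast+
  have "Min (E \<inter> L) \<le> e" if e: "e \<in> E" for e
  proof -
    obtain l where "l \<in> E \<inter> L" "l \<le> e"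
      using dom[OF e] by blast
    then show ?thesis
      using Min_le[OF fin(1)] order_trans by blast
  qed
  moreover have m: "Min (E \<inter> L) \<in> E \<inter> L"
    using Min_in[OF fin] .
  ultimately have "Inf E = Min (E \<inter> L)"
    by (intro cInf_eq_minimum) auto
  with m show ?thesis by simp
qed

theorem lemma4:
  fixes T1 :: "'a mtree" and T2 :: "'b mtree"
  assumes "merge_tree T1" and "merge_tree T2"
  shows "interleaving_dist T1 T2 \<in>
           {\<bar>ht T1 u - ht T2 w\<bar> | u w. u \<in> nodes T1 \<and> w \<in> nodes T2}
         \<union> {\<bar>ht T1 u - ht T1 u'\<bar> / 2 | u u'. u \<in> nodes T1 \<and> u' \<in> nodes T1}
         \<union> {\<bar>ht T2 w - ht T2 w'\<bar> / 2 | w w'. w \<in> nodes T2 \<and> w' \<in> nodes T2}"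
proof -
  let ?E = "{\<epsilon>. \<exists>\<alpha> \<beta>. eps_compatible T1 T2 \<epsilon> \<alpha> \<beta>}"
  have "?E \<noteq> {}"
    using ex_eps_compatible[OF assms] by blast
  moreover have "\<exists>l\<in>?E \<inter> critical_values T1 T2. l \<le> e" if "e \<in> ?E" for e
    using compatible_critical_value_below[OF assms] that by blast
  ultimately have "Inf ?E \<in> ?E \<inter> critical_values T1 T2"
    by (rule cInf_mem_if_dominated_by_finite[OF finite_critical_values[OF assms]])
  then show ?thesis
    unfolding interleaving_dist_def critical_values_def by blast
qed

end
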